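(* Let $k$ be a positive integer such that $k+1$ is an odd prime, and let $p>k(k+1)$ be an odd prime. For every $\mathbf v\in N_k$ there exist $s\in\mathbb{Z}_{k+1}$ and $r\in\mathbb{Z}$ such that, working modulo $k+1$, every coordinate of $s\mathbf v+\mathbf r_k\!\left(\tfrac{r}{p}\right)$ lies in $\{1,\ldots,k-1\}$.
   Context: $\mathbb{Z}_{k+1}$ is the integers modulo $k+1$. $N_k:=\{\mathbf v\in\mathbb{Z}_{k+1}^k:\ \mathbf v\neq\mathbf 0 \text{ and } \mathbf v \text{ has at least one zero coordinate}\}$. For $x\in\mathbb{R}$, $\{x\}=x-\lfloor x\rfloor$ is the fractional part, and for $t\in\mathbb{R}$, $\mathbf r_k(t):=\big(\lfloor (k+1)\{t\}\rfloor,\lfloor (k+1)\{2t\}\rfloor,\ldots,\lfloor (k+1)\{kt\}\rfloor\big)\in\{0,\ldots,k\}^k$, reduced modulo $k+1$ when added to elements of $\mathbb{Z}_{k+1}^k$. *)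

theory Defs
  imports Complex_Main "HOL-Computational_Algebra.Primes"
begin

text \<open>Elements of Z_{k+1}^k are represented as functions nat => int, coordinates
indexed by 1..k with values in the residues 0..k, and value 0 outside 1..k.\<close>

definition Nk :: "nat \<Rightarrow> (nat \<Rightarrow> int) set" where
  "Nk k = {v. (\<forall>j. (1 \<le> j \<and> j \<le> k \<longrightarrow> v j \<in> {0..int k}) \<and>
                   (\<not> (1 \<le> j \<and> j \<le> k) \<longrightarrow> v j = 0))
            \<and> (\<exists>j\<in>{1..k}. v j \<noteq> 0)
            \<and> (\<exists>j\<in>{1..k}. v j = 0)}"

definition rk :: "nat \<Rightarrow> real \<Rightarrow> nat \<Rightarrow> int" where
  "rk k t j = \<lfloor>(real k + 1) * frac (real j * t)\<rfloor>"

end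

theory Submission
  imports Defs "HOL-Number_Theory.Number_Theory" "HOL-Computational_Algebra.Polynomial"
begin

(*
  Write q = k + 1.  With r = floor (a p / q) + 1 the number r / p exceeds a / q by at most 1 / p,
  so for p > k q the j-th coordinate of r_k (r / p) is a j mod q.  It therefore suffices to find
  s, a with s v_j + a j not congruent to 0 or -1 mod q for every j.

  Suppose there is no such pair, and let R be the set of residues rho for which some linear form
  x_j = v_j - rho j vanishes mod q.  For rho outside R, the pair s = -u, a = rho u shows that
  every nonzero residue c = 1/u occurs among the x_j; so the x_j permute the nonzero residues and
  their product is (q - 1)! = -1 by Wilson.  Summing over rho gives |R| - q, which is congruent
  to |R|.  But the sum over all residues of the degree q - 1 polynomial prod_j (v_j - rho j) is
  minus its leading coefficient (-1)^(q-1) (q - 1)!, i.e. 1.  Hence |R| = 1 mod q, whereas each j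
  contributes one root, 0 is a root (some v_j = 0) and so is v_j / j for some v_j <> 0, giving
  2 <= |R| <= q - 1.
*)

lemma floor_mult_frac:
  fixes n :: int and x :: real
  assumes "n > 0"
  shows "\<lfloor>of_int n * frac x\<rfloor> = \<lfloor>of_int n * x\<rfloor> mod n"
proof -
  have "of_int n * frac x = of_int n * x - of_int (n * \<lfloor>x\<rfloor>)"
    by (simp add: frac_def algebra_simps)
  then have "\<lfloor>of_int n * frac x\<rfloor> = \<lfloor>of_int n * x\<rfloor> - n * \<lfloor>x\<rfloor>"
    by (metis floor_diff_of_int)
  moreover have "\<lfloor>x\<rfloor> = \<lfloor>of_int n * x\<rfloor> div n"
    using floor_divide_real_eq_div[of n "of_int n * x"] assms by simp
  ultimately show ?thesis
    by (simp add: minus_mult_div_eq_mod)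
qed

lemma rk_eq_floor_mod: "rk k t j = \<lfloor>real j * ((real k + 1) * t)\<rfloor> mod (int k + 1)"
  using floor_mult_frac[of "int k + 1" "real j * t"] by (simp add: rk_def algebra_simps)

lemma floor_mult_eq_if_close:
  fixes x :: real
  assumes "of_int a \<le> x" and "real j * (x - of_int a) < 1"
  shows "\<lfloor>real j * x\<rfloor> = a * int j"
proof -
  have "0 \<le> real j * (x - of_int a)"
    using assms(1) by simp
  with assms(2) show ?thesis
    by (simp add: floor_eq_iff algebra_simps)
qed

lemma rk_at_rounded_fraction:
  fixes a :: int and j k p :: nat
  assumes "j * (k + 1) < p"
  shows "rk k (of_int (a * int p div (int k + 1) + 1) / real p) j = a * int j mod (int k + 1)"
proof -
  define n where "n = int k + 1"
  define r where "r = a * int p div n + 1"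
  define d where "d = n * r - a * int p"
  have "n > 0"
    unfolding n_def by simp
  have "d = n - a * int p mod n"
    using div_mult_mod_eq[of "a * int p" n] unfolding d_def r_def by (simp add: algebra_simps)
  with \<open>n > 0\<close> have "0 < d" and "d \<le> n"
    using pos_mod_bound pos_mod_sign by (simp_all add: not_le)
  have p: "real p > 0"
    using assms by simp
  define x where "x = of_int n * (of_int r / real p)"
  have x: "x - of_int a = of_int d / real p"
    using p unfolding x_def d_def by (simp add: field_simps)
  have "0 \<le> of_int d / real p"
    using \<open>0 < d\<close> by simp
  then have "of_int a \<le> x"
    using x by linarith
  moreover have "real j * (x - of_int a) < 1"
  proof -
    have "int (j * (k + 1)) < int p"
      using assms by (simp only: of_nat_less_iff)
    moreover have "int j * d \<le> int j * n"
      using \<open>d \<le> n\<close> by (simp add: mult_left_mono)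
    ultimately have "int j * d < int p"
      unfolding n_def by (simp add: distrib_left)
    then have "real_of_int (int j * d) < real p"
      by (metis of_int_less_iff of_int_of_nat_eq)
    then have "real_of_int (int j * d) / real p < 1"
      using p by simp
    then show ?thesis
      using x by simp
  qed
  ultimately show ?thesis
    using floor_mult_eq_if_close[of a x j] unfolding rk_eq_floor_mod x_def n_def r_def
    by (simp add: algebra_simps)
qed

lemma prime_dvd_sum_powers:
  fixes q i :: nat
  assumes q: "prime q" and i: "i < q - 1"
  shows "q dvd (\<Sum>x<q. x ^ i)"
proof (cases "i = 0")
  case True
  then show ?thesis by simp
next
  case False
  show ?thesis
  proof (rule ccontr)
    assume not_dvd: "\<not> q dvd (\<Sum>x<q. x ^ i)"
    obtain g where g: "residue_primroot q g"
      using prime_primitive_root_exists q prime_gt_1_nat by blast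
    have "coprime q g" and ord_g: "ord q g = q - 1"
      using g q by (auto simp: residue_primroot_def totient_prime)
    define f where "f x = (g * x) mod q" for x
    have "inj_on f {..<q}"
    proof (rule inj_onI)
      fix x y assume "x \<in> {..<q}" "y \<in> {..<q}" "f x = f y"
      moreover from \<open>f x = f y\<close> have "[g * x = g * y] (mod q)"
        unfolding f_def cong_def .
      then have "[x = y] (mod q)"
        using \<open>coprime q g\<close> by (metis cong_mult_lcancel_nat coprime_commute)
      ultimately show "x = y"
        by (simp add: cong_def)
    qed
    moreover have "f ` {..<q} \<subseteq> {..<q}"
      using q prime_gt_0_nat by (auto simp: f_def)
    ultimately have perm: "f ` {..<q} = {..<q}"
      by (simp add: endo_inj_surj)
    \<comment> \<open>the power sum is invariant under x \<mapsto> g x, hence congruent to g ^ i times itself\<close>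
    have "(\<Sum>x<q. x ^ i) = (\<Sum>x<q. f x ^ i)"
      using sum.reindex[OF \<open>inj_on f {..<q}\<close>, of "\<lambda>x. x ^ i"] perm by simp
    also have "[\<dots> = (\<Sum>x<q. (g * x) ^ i)] (mod q)"
      by (intro cong_sum cong_pow) (simp add: f_def cong_def)
    also have "(\<Sum>x<q. (g * x) ^ i) = g ^ i * (\<Sum>x<q. x ^ i)"
      by (simp add: power_mult_distrib sum_distrib_left)
    finally have "[1 * (\<Sum>x<q. x ^ i) = g ^ i * (\<Sum>x<q. x ^ i)] (mod q)"
      by simp
    moreover have "coprime (\<Sum>x<q. x ^ i) q"
      using not_dvd q by (metis coprime_commute prime_imp_coprime)
    ultimately have "[g ^ i = 1] (mod q)"
      using cong_mult_rcancel_nat cong_sym by blast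
    then show False
      using ord_minimal[of i q g] ord_g i False by simp
  qed
qed

lemma sum_powers_pred_prime_cong:
  fixes q :: nat
  assumes q: "prime q"
  shows "[(\<Sum>x<q. x ^ (q - 1)) = q - 1] (mod q)"
proof -
  have "{..<q} = insert 0 {1..<q}"
    using prime_gt_0_nat[OF q] by auto
  then have "(\<Sum>x<q. x ^ (q - 1)) = (\<Sum>x\<in>{1..<q}. x ^ (q - 1))"
    using prime_gt_1_nat[OF q] by simp
  also have "[\<dots> = (\<Sum>x\<in>{1..<q}. 1)] (mod q)"
    using q by (intro cong_sum fermat_theorem) (auto dest: dvd_imp_le)
  finally show ?thesis
    by simp
qed

lemma poly_eq_sum_monomials:
  fixes f :: "'a::comm_semiring_1 poly"
  assumes "degree f \<le> n"
  shows "poly f x = (\<Sum>i\<le>n. coeff f i * x ^ i)"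
  by (subst poly_as_sum_of_monoms'[OF assms, symmetric]) (simp add: poly_sum poly_monom)

lemma sum_poly_residues_cong:
  fixes f :: "int poly" and q :: nat
  assumes q: "prime q" and deg: "degree f \<le> q - 1"
  shows "[(\<Sum>x<q. poly f (int x)) = - coeff f (q - 1)] (mod int q)"
proof -
  have power_sum: "[coeff f i * int (\<Sum>x<q. x ^ i) = (if i = q - 1 then - coeff f i else 0)] (mod int q)"
    if "i \<le> q - 1" for i
  proof (cases "i = q - 1")
    case True
    have "[int (\<Sum>x<q. x ^ (q - 1)) = int q - 1] (mod int q)"
      using sum_powers_pred_prime_cong[OF q] prime_gt_0_nat[OF q]
      by (simp add: cong_int_iff [symmetric] of_nat_diff)
    also have "[int q - 1 = - 1] (mod int q)"
      by (simp add: cong_iff_dvd_diff)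
    finally have "[coeff f i * int (\<Sum>x<q. x ^ i) = coeff f i * - 1] (mod int q)"
      unfolding True by (rule cong_scalar_left)
    with True show ?thesis
      by simp
  next
    case False
    then have "int q dvd int (\<Sum>x<q. x ^ i)"
      using prime_dvd_sum_powers[OF q, of i] that by (simp only: int_dvd_int_iff)
    then show ?thesis
      using False by (simp add: cong_0_iff)
  qed
  have "(\<Sum>x<q. poly f (int x)) = (\<Sum>i\<le>q - 1. coeff f i * int (\<Sum>x<q. x ^ i))"
    by (simp add: poly_eq_sum_monomials[OF deg] sum_distrib_left sum.swap[of _ "{..<q}"])
  also have "[\<dots> = (\<Sum>i\<le>q - 1. if i = q - 1 then - coeff f i else 0)] (mod int q)"
    using power_sum by (intro cong_sum) simp
  finally show ?thesis
    by simp
qed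

lemma minus_one_power_pred_prime_cong:
  assumes "prime q"
  shows "[(- 1 :: int) ^ (q - 1) = 1] (mod int q)"
proof (cases "q = 2")
  case True
  then show ?thesis by (simp add: cong_iff_dvd_diff)
next
  case False
  then have "odd q"
    using assms prime_odd_nat prime_ge_2_nat by (metis le_neq_implies_less)
  then have "(- 1 :: int) ^ (q - 1) = 1"
    using assms prime_gt_0_nat by simp
  then show ?thesis by simp
qed

lemma sum_prod_linear_forms_cong:
  fixes q :: nat and w :: "nat \<Rightarrow> int"
  assumes q: "prime q"
  shows "[(\<Sum>\<rho><q. \<Prod>j\<in>{1..q-1}. (w j - int \<rho> * int j)) = 1] (mod int q)"
proof -
  define G where "G = (\<Prod>j\<in>{1..q-1}. [:w j, - int j:])"
  have deg: "degree G = q - 1"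
    unfolding G_def by (subst degree_prod_eq_sum_degree) auto
  have "coeff G (q - 1) = (\<Prod>j\<in>{1..q-1}. - int j)"
    using lead_coeff_prod[of "\<lambda>j. [:w j, - int j:]" "{1..q-1}"] deg unfolding G_def by simp
  also have "\<dots> = (\<Prod>j\<in>{1..q-1}. (- 1) * int j)"
    by simp
  also have "\<dots> = (- 1) ^ (q - 1) * fact (q - 1)"
    by (simp only: prod.distrib prod_constant card_atLeastAtMost) (simp add: fact_prod)
  finally have lead: "coeff G (q - 1) = (- 1) ^ (q - 1) * fact (q - 1)" .
  have "(\<Sum>\<rho><q. \<Prod>j\<in>{1..q-1}. (w j - int \<rho> * int j)) = (\<Sum>\<rho><q. poly G (int \<rho>))"
    unfolding G_def poly_prod by (simp add: algebra_simps)
  also have "[\<dots> = - ((- 1) ^ (q - 1) * fact (q - 1))] (mod int q)"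
    using sum_poly_residues_cong[OF q, of G] deg unfolding lead by simp
  also have "[- ((- 1) ^ (q - 1) * fact (q - 1)) = - ((- 1) ^ (q - 1) * - 1 :: int)] (mod int q)"
    by (intro cong_minus_minus_iff[THEN iffD2] cong_scalar_left wilson_theorem q)
  also have "[- ((- 1) ^ (q - 1) * - 1 :: int) = 1] (mod int q)"
    using minus_one_power_pred_prime_cong[OF q] by simp
  finally show ?thesis .
qed

lemma linear_cong_unique_root:
  fixes q j :: nat and w :: int
  assumes q: "prime q" and j: "\<not> q dvd j"
  shows "\<exists>!\<rho>. \<rho> < q \<and> int q dvd w - int \<rho> * int j"
proof -
  have "coprime (int j) (int q)"
    using prime_imp_coprime[OF q j] by (simp add: coprime_commute)
  then obtain u where u: "[int j * u = 1] (mod int q)"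
    using cong_solve_coprime_int by blast
  define \<rho> where "\<rho> = nat (w * u mod int q)"
  have q0: "int q > 0"
    using prime_gt_0_nat[OF q] by simp
  then have \<rho>: "int \<rho> = w * u mod int q"
    unfolding \<rho>_def by simp
  have "\<rho> < q"
    using \<rho> pos_mod_bound[OF q0, of "w * u"] by linarith
  moreover have "[int \<rho> * int j = w] (mod int q)"
  proof -
    have "[int \<rho> = w * u] (mod int q)"
      unfolding \<rho> by (simp add: cong_def)
    then have "[int \<rho> * int j = w * u * int j] (mod int q)"
      by (rule cong_scalar_right)
    also have "w * u * int j = w * (int j * u)"
      by (simp add: ac_simps)
    also have "[w * (int j * u) = w * 1] (mod int q)"
      using u by (rule cong_scalar_left)
    finally show ?thesis by simp
  qed
  moreover have "\<sigma> = \<tau>"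
    if "\<sigma> < q" "int q dvd w - int \<sigma> * int j" "\<tau> < q" "int q dvd w - int \<tau> * int j" for \<sigma> \<tau>
  proof -
    have "int q dvd (w - int \<tau> * int j) - (w - int \<sigma> * int j)"
      using dvd_diff[OF that(4) that(2)] .
    then have "int q dvd (int \<sigma> - int \<tau>) * int j"
      by (simp add: algebra_simps)
    then have "int q dvd int \<sigma> - int \<tau>"
      using q j by (simp add: prime_dvd_mult_iff)
    then show "\<sigma> = \<tau>"
      using that by (metis cong_iff_dvd_diff cong_int_iff cong_less_modulus_unique_nat)
  qed
  ultimately show ?thesis
    by (metis cong_iff_dvd_diff cong_sym)
qed

lemma prod_cong_minus_one_if_residues_permuted:
  fixes q :: nat and x :: "nat \<Rightarrow> int"
  assumes q: "prime q" and perm: "(\<lambda>j. x j mod int q) ` {1..q-1} = int ` {1..q-1}"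
  shows "[(\<Prod>j\<in>{1..q-1}. x j) = - 1] (mod int q)"
proof -
  have "inj_on (\<lambda>j. x j mod int q) {1..q-1}"
    using perm by (intro eq_card_imp_inj_on) (simp_all add: card_image)
  then have "(\<Prod>j\<in>{1..q-1}. x j mod int q) = (\<Prod>c\<in>int ` {1..q-1}. c)"
    using prod.reindex[of "\<lambda>j. x j mod int q" "{1..q-1}" id] perm by simp
  also have "\<dots> = fact (q - 1)"
    by (simp add: prod.reindex fact_prod)
  finally have "[(\<Prod>j\<in>{1..q-1}. x j) = fact (q - 1)] (mod int q)"
    by (metis (mono_tags, lifting) cong_mod_right cong_prod cong_refl)
  then show ?thesis
    using wilson_theorem[OF q] by (rule cong_trans)
qed

lemma residues_permuted_if_every_unit_hits:
  fixes q :: nat and x :: "nat \<Rightarrow> int"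
  assumes q: "prime q"
    and nonzero: "\<forall>j\<in>{1..q-1}. \<not> int q dvd x j"
    and hits: "\<And>u. \<exists>j\<in>{1..q-1}. [u * x j = 0] (mod int q) \<or> [u * x j = 1] (mod int q)"
  shows "(\<lambda>j. x j mod int q) ` {1..q-1} = int ` {1..q-1}"
proof
  have q0: "int q > 0"
    using prime_gt_0_nat[OF q] by simp
  show "(\<lambda>j. x j mod int q) ` {1..q-1} \<subseteq> int ` {1..q-1}"
  proof clarify
    fix j assume "j \<in> {1..q-1}"
    then have "x j mod int q \<noteq> 0"
      using nonzero by (simp add: dvd_eq_mod_eq_0)
    moreover have "0 \<le> x j mod int q" "x j mod int q < int q"
      using q0 by simp_all
    ultimately show "x j mod int q \<in> int ` {1..q-1}"
      by (intro image_eqI[of _ _ "nat (x j mod int q)"]) auto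
  qed
  show "int ` {1..q-1} \<subseteq> (\<lambda>j. x j mod int q) ` {1..q-1}"
  proof clarify
    fix c assume c: "c \<in> {1..q-1}"
    then have "\<not> q dvd c"
      by (auto dest: dvd_imp_le)
    then have "coprime (int c) (int q)"
      using prime_imp_coprime[OF q] by (simp add: coprime_commute)
    then obtain u where u: "[int c * u = 1] (mod int q)"
      using cong_solve_coprime_int by blast
    obtain j where j: "j \<in> {1..q-1}"
      and "[u * x j = 0] (mod int q) \<or> [u * x j = 1] (mod int q)"
      using hits by blast
    moreover have "\<not> [u * x j = 0] (mod int q)"
    proof
      assume "[u * x j = 0] (mod int q)"
      then have "[int c * u * x j = 0] (mod int q)"
        using cong_scalar_left[of _ _ _ "int c"] by (fastforce simp: ac_simps)
      then have "[x j = 0] (mod int q)"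
        using u cong_scalar_right[OF u, of "x j"] by (metis cong_sym cong_trans mult_1)
      then show False
        using nonzero j by (simp add: cong_0_iff)
    qed
    ultimately have "[u * x j = 1] (mod int q)"
      by blast
    then have "[x j = int c] (mod int q)"
      using cong_scalar_left[of _ _ _ "int c"] cong_scalar_right[OF u, of "x j"]
      by (metis cong_sym cong_trans mult.assoc mult_1 mult.right_neutral)
    moreover have "int c < int q"
      using c by auto
    ultimately have "x j mod int q = int c"
      by (simp add: cong_def)
    with j show "int c \<in> (\<lambda>j. x j mod int q) ` {1..q-1}"
      by (metis image_eqI)
  qed
qed

definition vanishing_residues :: "nat \<Rightarrow> (nat \<Rightarrow> int) \<Rightarrow> nat set" where
  "vanishing_residues q v = {\<rho>. \<rho> < q \<and> (\<exists>j\<in>{1..q-1}. int q dvd v j - int \<rho> * int j)}"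

lemma card_vanishing_residues_le:
  assumes q: "prime q"
  shows "card (vanishing_residues q v) \<le> q - 1"
proof -
  have roots_le: "card {\<rho>. \<rho> < q \<and> int q dvd v j - int \<rho> * int j} \<le> 1" if "j \<in> {1..q-1}" for j
  proof -
    have "\<not> q dvd j"
      using that by (auto dest: dvd_imp_le)
    then have "\<exists>!\<rho>. \<rho> < q \<and> int q dvd v j - int \<rho> * int j"
      by (rule linear_cong_unique_root[OF q])
    then show ?thesis
      by (subst One_nat_def, subst card_le_Suc0_iff_eq) auto
  qed
  have "vanishing_residues q v = (\<Union>j\<in>{1..q-1}. {\<rho>. \<rho> < q \<and> int q dvd v j - int \<rho> * int j})"
    unfolding vanishing_residues_def by auto
  then have "card (vanishing_residues q v)
      \<le> (\<Sum>j\<in>{1..q-1}. card {\<rho>. \<rho> < q \<and> int q dvd v j - int \<rho> * int j})"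
    by (simp add: card_UN_le)
  also have "\<dots> \<le> (\<Sum>j\<in>{1..q-1}. 1)"
    using roots_le by (rule sum_mono)
  finally show ?thesis
    by simp
qed

lemma two_le_card_vanishing_residues:
  assumes q: "prime q"
    and j0: "j0 \<in> {1..q-1}" "int q dvd v j0"
    and j1: "j1 \<in> {1..q-1}" "\<not> int q dvd v j1"
  shows "2 \<le> card (vanishing_residues q v)"
proof -
  have "\<not> q dvd j1"
    using j1 by (auto dest: dvd_imp_le)
  then obtain \<rho> where \<rho>: "\<rho> < q" "int q dvd v j1 - int \<rho> * int j1"
    using linear_cong_unique_root[OF q] by blast
  with j1 have "\<rho> \<noteq> 0"
    by (metis mult_zero_left of_nat_0 diff_zero)
  moreover have "{0, \<rho>} \<subseteq> vanishing_residues q v"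
    using j0 j1 \<rho> prime_gt_0_nat[OF q] unfolding vanishing_residues_def by auto
  moreover have "finite (vanishing_residues q v)"
    unfolding vanishing_residues_def by simp
  ultimately show ?thesis
    by (metis card_2_iff card_mono)
qed

lemma prod_linear_forms_cong_if_every_pair_hits:
  fixes q :: nat and v :: "nat \<Rightarrow> int"
  assumes q: "prime q" and "\<rho> < q"
    and no_pair: "\<And>s a. \<exists>j\<in>{1..q-1}.
      [s * v j + a * int j = 0] (mod int q) \<or> [s * v j + a * int j = - 1] (mod int q)"
  shows "[(\<Prod>j\<in>{1..q-1}. v j - int \<rho> * int j)
    = (if \<rho> \<in> vanishing_residues q v then 0 else - 1)] (mod int q)"
proof (cases "\<rho> \<in> vanishing_residues q v")
  case True
  then obtain j where "j \<in> {1..q-1}" "int q dvd v j - int \<rho> * int j"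
    unfolding vanishing_residues_def by blast
  then have "int q dvd (\<Prod>j\<in>{1..q-1}. v j - int \<rho> * int j)"
    by (meson dvd_prodI dvd_trans finite_atLeastAtMost)
  with True show ?thesis
    by (simp add: cong_0_iff)
next
  case False
  then have "\<forall>j\<in>{1..q-1}. \<not> int q dvd v j - int \<rho> * int j"
    using \<open>\<rho> < q\<close> unfolding vanishing_residues_def by blast
  moreover have "\<exists>j\<in>{1..q-1}. [u * (v j - int \<rho> * int j) = 0] (mod int q)
      \<or> [u * (v j - int \<rho> * int j) = 1] (mod int q)" for u
  proof -
    have "- u * v j + int \<rho> * u * int j = - (u * (v j - int \<rho> * int j))" for j
      by (simp add: algebra_simps)
    then show ?thesis
      using no_pair[of "- u" "int \<rho> * u"] by (metis cong_minus_minus_iff minus_zero)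
  qed
  ultimately show ?thesis
    using False prod_cong_minus_one_if_residues_permuted[OF q] residues_permuted_if_every_unit_hits[OF q]
    by simp
qed

lemma exists_pair_avoiding_zero_and_minus_one:
  fixes q :: nat and v :: "nat \<Rightarrow> int"
  assumes q: "prime q"
    and "j0 \<in> {1..q-1}" "int q dvd v j0"
    and "j1 \<in> {1..q-1}" "\<not> int q dvd v j1"
  shows "\<exists>s a. \<forall>j\<in>{1..q-1}.
    \<not> [s * v j + a * int j = 0] (mod int q) \<and> \<not> [s * v j + a * int j = - 1] (mod int q)"
proof (rule ccontr)
  assume "\<not> ?thesis"
  then have no_pair: "\<exists>j\<in>{1..q-1}.
      [s * v j + a * int j = 0] (mod int q) \<or> [s * v j + a * int j = - 1] (mod int q)" for s a
    by blast
  define R where "R = vanishing_residues q v"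
  have "R \<subseteq> {..<q}"
    unfolding R_def vanishing_residues_def by auto
  have "[1 = (\<Sum>\<rho><q. \<Prod>j\<in>{1..q-1}. v j - int \<rho> * int j)] (mod int q)"
    using sum_prod_linear_forms_cong[OF q] by (rule cong_sym)
  also have "[(\<Sum>\<rho><q. \<Prod>j\<in>{1..q-1}. v j - int \<rho> * int j)
      = (\<Sum>\<rho><q. if \<rho> \<in> R then 0 else - 1)] (mod int q)"
    unfolding R_def using prod_linear_forms_cong_if_every_pair_hits[OF q _ no_pair]
    by (intro cong_sum) simp
  also have "(\<Sum>\<rho><q. if \<rho> \<in> R then 0 else - 1 :: int) = - int (card ({..<q} - R))"
    by (simp add: sum.If_cases Diff_eq)
  also have "\<dots> = int (card R) - int q"
    using \<open>R \<subseteq> {..<q}\<close> card_mono[OF finite_lessThan \<open>R \<subseteq> {..<q}\<close>]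
    by (simp add: card_Diff_subset finite_subset of_nat_diff)
  also have "[int (card R) - int q = int (card R)] (mod int q)"
    by (simp add: cong_iff_dvd_diff)
  finally have "int q dvd int (card R) - 1"
    by (simp add: cong_iff_dvd_diff dvd_diff_commute)
  moreover have "2 \<le> card R" "card R \<le> q - 1"
    unfolding R_def using assms two_le_card_vanishing_residues card_vanishing_residues_le by blast+
  ultimately show False
    by (auto dest: zdvd_imp_le)
qed

lemma mod_mem_range_if_not_cong_zero_minus_one:
  fixes y n :: int
  assumes "\<not> [y = 0] (mod n)" and "\<not> [y = - 1] (mod n)" and "n > 0"
  shows "y mod n \<in> {1..n - 2}"
proof -
  have "y mod n \<noteq> 0"
    using assms(1) by (simp add: cong_0_iff dvd_eq_mod_eq_0)
  moreover have "y mod n \<noteq> n - 1"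
    using assms(2,3) by (simp add: cong_def zmod_minus1)
  moreover have "0 \<le> y mod n" and "y mod n < n"
    using assms(3) by simp_all
  ultimately show ?thesis
    by auto
qed

theorem lemma4p3:
  fixes k p :: nat
  assumes "k > 0" and "prime (k + 1)" and "odd (k + 1)"
      and "prime p" and "odd p" and "p > k * (k + 1)"
      and "v \<in> Nk k"
  shows "\<exists>s \<in> {0..int k}. \<exists>r :: int. \<forall>j \<in> {1..k}.
           (s * v j + rk k (real_of_int r / real p) j) mod (int k + 1) \<in> {1..int k - 1}"
proof -
  obtain j0 j1 where j0: "j0 \<in> {1..k}" "v j0 = 0" and j1: "j1 \<in> {1..k}" "v j1 \<noteq> 0"
    and range: "\<And>j. j \<in> {1..k} \<Longrightarrow> v j \<in> {0..int k}"
    using assms(7) unfolding Nk_def by auto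
  have "\<not> int (k + 1) dvd v j1"
    using j1 range[OF j1(1)] by (auto dest: zdvd_imp_le)
  then have "\<exists>s a. \<forall>j\<in>{1..k + 1 - 1}. \<not> [s * v j + a * int j = 0] (mod int (k + 1))
      \<and> \<not> [s * v j + a * int j = - 1] (mod int (k + 1))"
    using j0 j1 by (intro exists_pair_avoiding_zero_and_minus_one[OF assms(2), of j0]) simp_all
  then obtain s a where sa: "\<forall>j\<in>{1..k}. \<not> [s * v j + a * int j = 0] (mod int k + 1)
      \<and> \<not> [s * v j + a * int j = - 1] (mod int k + 1)"
    unfolding of_nat_add of_nat_1 add_diff_cancel_right' by blast
  define r where "r = a * int p div (int k + 1) + 1"
  have "(s mod (int k + 1) * v j + rk k (real_of_int r / real p) j) mod (int k + 1) \<in> {1..int k - 1}"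
    if j: "j \<in> {1..k}" for j
  proof -
    have "j * (k + 1) < p"
      using j assms(6) mult_right_mono[of j k "k + 1"] by auto
    then have rk: "rk k (real_of_int r / real p) j = a * int j mod (int k + 1)"
      unfolding r_def by (rule rk_at_rounded_fraction)
    have "[s mod (int k + 1) * v j + rk k (real_of_int r / real p) j = s * v j + a * int j] (mod int k + 1)"
      unfolding rk by (intro cong_add cong_scalar_right) (simp_all add: cong_def)
    moreover have "(s * v j + a * int j) mod (int k + 1) \<in> {1..int k - 1}"
      using sa j mod_mem_range_if_not_cong_zero_minus_one[of _ "int k + 1"] by simp
    ultimately show ?thesis
      unfolding cong_def by simp
  qed
  moreover have "s mod (int k + 1) \<in> {0..int k}"
    using pos_mod_bound[of "int k + 1" s] by simp
  ultimately show ?thesis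
    by blast
qed

end
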